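(* Let $X$ be a nonnegative real-valued random variable and $\Lambda(\lambda)=\log\mathbb E[e^{\lambda X}]$, with Fenchel–Legendre transform $\Lambda^\star(x)=\sup_{\lambda\in\mathbb R}(\lambda x-\Lambda(\lambda))$. Then $$\lim_{\nu\downarrow0}\nu\Lambda^\star(1/\nu)=\sup\{\lambda:\Lambda(\lambda)<\infty\}.$$ *)

theory Defs
  imports "HOL-Probability.Probability"
begin

definition log_mgf :: "'a measure \<Rightarrow> ('a \<Rightarrow> real) \<Rightarrow> real \<Rightarrow> ereal" where
  "log_mgf M X l =
     (let E = (\<integral>\<^sup>+ \<omega>. ennreal (exp (l * X \<omega>)) \<partial>M)
      in if E = \<infinity> then \<infinity> else ereal (ln (enn2real E)))"

definition fl_transform :: "(real \<Rightarrow> ereal) \<Rightarrow> real \<Rightarrow> ereal" where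
  "fl_transform L x = (SUP l\<in>UNIV. ereal (l * x) - L l)"

end

theory Submission
  imports Defs
begin

text \<open>
  Write \<open>S\<close> for the supremum of the effective domain of \<open>\<Lambda>\<close>. For \<open>\<lambda>\<close> with \<open>\<Lambda>(\<lambda>) < \<infinity>\<close>, the
  definition of \<open>\<Lambda>\<^sup>\<star>\<close> gives \<open>\<nu> \<Lambda>\<^sup>\<star>(1/\<nu>) \<ge> \<lambda> - \<nu> \<Lambda>(\<lambda>) \<rightarrow> \<lambda>\<close>, so the liminf is at least \<open>S\<close>.
  Conversely, since \<open>X \<ge> 0\<close> we have \<open>\<Lambda>(\<lambda>) \<ge> 0\<close> for \<open>\<lambda> \<ge> 0\<close>, and for \<open>\<lambda> \<le> 0\<close> the bound
  \<open>\<Lambda>(\<lambda>) \<ge> \<lambda> c + log P(X \<le> c)\<close> holds for every \<open>c\<close>. Choosing \<open>c\<close> with \<open>p = P(X \<le> c) > 0\<close>,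
  this yields \<open>\<Lambda>\<^sup>\<star>(x) \<le> b x - log p\<close> for all \<open>x \<ge> c\<close> and all \<open>b \<ge> S\<close>, hence
  \<open>\<nu> \<Lambda>\<^sup>\<star>(1/\<nu>) \<le> b - \<nu> log p \<rightarrow> b\<close>.
\<close>

lemma log_mgf_neq_minf: "log_mgf M X l \<noteq> -\<infinity>"
  unfolding log_mgf_def Let_def by auto

lemma log_mgf_finite_iff: "log_mgf M X l < \<infinity> \<longleftrightarrow> (\<exists>r. log_mgf M X l = ereal r)"
  using log_mgf_neq_minf[of M X l] by (cases "log_mgf M X l") auto

lemma (in prob_space) log_mgf_zero: "log_mgf M X 0 = 0"
  unfolding log_mgf_def Let_def by (simp add: emeasure_space_1)

lemma (in prob_space) log_mgf_nonneg:
  assumes "\<forall>\<omega>\<in>space M. X \<omega> \<ge> 0" and "l \<ge> 0"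
  shows "log_mgf M X l \<ge> 0"
proof -
  let ?E = "\<integral>\<^sup>+ \<omega>. ennreal (exp (l * X \<omega>)) \<partial>M"
  have "(\<integral>\<^sup>+ \<omega>. 1 \<partial>M) \<le> ?E"
    by (rule nn_integral_mono) (use assms in auto)
  hence E_ge_1: "1 \<le> ?E" by (simp add: emeasure_space_1)
  show ?thesis
  proof (cases "?E = \<infinity>")
    case False
    have "1 \<le> enn2real ?E"
      using E_ge_1 False enn2real_mono[of 1 ?E] by (simp add: less_top)
    thus ?thesis unfolding log_mgf_def Let_def using False by simp
  qed (simp add: log_mgf_def)
qed

lemma (in prob_space) log_mgf_ge_of_nonpos:
  assumes "X \<in> borel_measurable M" and "l \<le> 0"
    and p_pos: "prob {\<omega>\<in>space M. X \<omega> \<le> c} > 0"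
  shows "log_mgf M X l \<ge> ereal (l * c + ln (prob {\<omega>\<in>space M. X \<omega> \<le> c}))"
proof -
  let ?S = "{\<omega>\<in>space M. X \<omega> \<le> c}"
  let ?E = "\<integral>\<^sup>+ \<omega>. ennreal (exp (l * X \<omega>)) \<partial>M"
  have S_sets: "?S \<in> sets M" using assms(1) by measurable
  have "ennreal (exp (l * c) * prob ?S) = (\<integral>\<^sup>+ \<omega>. ennreal (exp (l * c)) * indicator ?S \<omega> \<partial>M)"
    using S_sets by (simp add: nn_integral_cmult_indicator emeasure_eq_measure ennreal_mult)
  also have "\<dots> \<le> ?E"
    by (rule nn_integral_mono) (use assms(2) in \<open>auto simp: indicator_def mult_left_mono_neg\<close>)
  finally have E_lower: "ennreal (exp (l * c) * prob ?S) \<le> ?E" .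
  show ?thesis
  proof (cases "?E = \<infinity>")
    case False
    have "exp (l * c) * prob ?S \<le> enn2real ?E"
      using enn2real_mono[OF E_lower] False by (simp add: less_top)
    hence "ln (exp (l * c) * prob ?S) \<le> ln (enn2real ?E)"
      using p_pos by (intro ln_mono) auto
    hence "l * c + ln (prob ?S) \<le> ln (enn2real ?E)"
      using p_pos by (simp add: ln_mult)
    thus ?thesis unfolding log_mgf_def Let_def using False by simp
  qed (simp add: log_mgf_def)
qed

lemma (in prob_space) exists_prob_le_pos:
  fixes X :: "'a \<Rightarrow> real"
  assumes "X \<in> borel_measurable M"
  shows "\<exists>c. prob {\<omega>\<in>space M. X \<omega> \<le> c} > 0"
proof (rule ccontr)
  assume "\<nexists>c. prob {\<omega>\<in>space M. X \<omega> \<le> c} > 0"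
  hence "emeasure M {\<omega>\<in>space M. X \<omega> \<le> real c} = 0" for c :: nat
    by (metis emeasure_eq_measure ennreal_0 measure_nonneg order_less_le)
  hence "emeasure M (\<Union>c::nat. {\<omega>\<in>space M. X \<omega> \<le> real c}) = 0"
    by (rule emeasure_UN_eq_0) (use assms in auto)
  moreover have "(\<Union>c::nat. {\<omega>\<in>space M. X \<omega> \<le> real c}) = space M"
    using real_nat_ceiling_ge by blast
  ultimately show False by (simp add: emeasure_space_1)
qed

lemma fl_transform_ge: "ereal (l * x) - L l \<le> fl_transform L x"
  unfolding fl_transform_def by (rule SUP_upper) simp

lemma (in prob_space) fl_transform_log_mgf_le:
  assumes X: "X \<in> borel_measurable M" "\<forall>\<omega>\<in>space M. X \<omega> \<ge> 0"
    and b: "(SUP l\<in>{l. log_mgf M X l < \<infinity>}. ereal l) \<le> ereal b"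
    and p_pos: "prob {\<omega>\<in>space M. X \<omega> \<le> c} > 0"
    and x: "c \<le> x" "0 \<le> x"
  shows "fl_transform (log_mgf M X) x \<le> ereal (b * x - ln (prob {\<omega>\<in>space M. X \<omega> \<le> c}))"
  unfolding fl_transform_def
proof (rule SUP_least)
  fix l :: real
  let ?p = "prob {\<omega>\<in>space M. X \<omega> \<le> c}"
  have domain_le_b: "l \<le> b" if "log_mgf M X l < \<infinity>" for l
    using order_trans[OF SUP_upper b] that by auto
  have "0 \<le> b" using domain_le_b[of 0] by (simp add: log_mgf_zero)
  have "ln ?p \<le> 0" using p_pos by simp
  show "ereal (l * x) - log_mgf M X l \<le> ereal (b * x - ln ?p)"
  proof (cases "log_mgf M X l < \<infinity>")
    case True
    then obtain r where r: "log_mgf M X l = ereal r" using log_mgf_finite_iff by blast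
    have "l * x - r \<le> b * x - ln ?p"
    proof (cases "l \<ge> 0")
      case True
      have "0 \<le> r" using log_mgf_nonneg[OF X(2) True] r by simp
      moreover have "l * x \<le> b * x"
        using domain_le_b \<open>log_mgf M X l < \<infinity>\<close> x(2) by (simp add: mult_right_mono)
      ultimately show ?thesis using \<open>ln ?p \<le> 0\<close> by linarith
    next
      case False
      have "l * c + ln ?p \<le> r"
        using log_mgf_ge_of_nonpos[OF X(1) _ p_pos, of l] False r by simp
      moreover have "l * (x - c) \<le> 0" using False x(1) by (simp add: mult_nonpos_nonneg)
      moreover have "0 \<le> b * x" using \<open>0 \<le> b\<close> x(2) by simp
      ultimately show ?thesis by (simp add: algebra_simps)
    qed
    thus ?thesis using r by simp
  qed (simp add: top.not_eq_extremum)
qed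

lemma eventually_less_scaled_fl_transform:
  fixes L :: "real \<Rightarrow> ereal"
  assumes "\<And>l. L l \<noteq> -\<infinity>" and "a < (SUP l\<in>{l. L l < \<infinity>}. ereal l)"
  shows "\<forall>\<^sub>F \<nu> in at_right 0. a < ereal \<nu> * fl_transform L (1 / \<nu>)"
proof -
  obtain l where "L l < \<infinity>" and a_less: "a < ereal l"
    using assms(2) by (auto simp: less_SUP_iff)
  then obtain r where r: "L l = ereal r" using assms(1) by (cases "L l") auto
  have "((\<lambda>\<nu>. l - \<nu> * r) \<longlongrightarrow> l) (at_right 0)"
    by (auto intro!: tendsto_eq_intros)
  hence "\<forall>\<^sub>F \<nu> in at_right 0. a < ereal (l - \<nu> * r)"
    using a_less by (rule order_tendstoD(1)[OF tendsto_ereal])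
  moreover have "\<forall>\<^sub>F \<nu> in at_right (0::real). 0 < \<nu>" by (rule eventually_at_right_less)
  ultimately show ?thesis
  proof eventually_elim
    case (elim \<nu>)
    have "ereal (l - \<nu> * r) = ereal \<nu> * (ereal (l * (1 / \<nu>)) - L l)"
      using elim(2) by (simp add: r field_simps)
    also have "\<dots> \<le> ereal \<nu> * fl_transform L (1 / \<nu>)"
      using elim(2) by (intro ereal_mult_left_mono fl_transform_ge) simp
    finally show ?case using elim(1) by simp
  qed
qed

lemma (in prob_space) eventually_scaled_fl_transform_log_mgf_less:
  assumes X: "X \<in> borel_measurable M" "\<forall>\<omega>\<in>space M. X \<omega> \<ge> 0"
    and "(SUP l\<in>{l. log_mgf M X l < \<infinity>}. ereal l) < a"
  shows "\<forall>\<^sub>F \<nu> in at_right 0. ereal \<nu> * fl_transform (log_mgf M X) (1 / \<nu>) < a"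
proof -
  obtain b where b: "(SUP l\<in>{l. log_mgf M X l < \<infinity>}. ereal l) < ereal b" "ereal b < a"
    using assms(3) ereal_dense2 by blast
  obtain c where p_pos: "prob {\<omega>\<in>space M. X \<omega> \<le> c} > 0"
    using exists_prob_le_pos[OF X(1)] by blast
  define q where "q = ln (prob {\<omega>\<in>space M. X \<omega> \<le> c})"
  have "((\<lambda>\<nu>. b - \<nu> * q) \<longlongrightarrow> b) (at_right 0)"
    by (auto intro!: tendsto_eq_intros)
  hence "\<forall>\<^sub>F \<nu> in at_right 0. ereal (b - \<nu> * q) < a"
    using b(2) by (rule order_tendstoD(2)[OF tendsto_ereal])
  moreover have "\<forall>\<^sub>F \<nu> in at_right (0::real). 0 < \<nu>" by (rule eventually_at_right_less)
  moreover have "\<forall>\<^sub>F \<nu> in at_right (0::real). max c 0 \<le> inverse \<nu>"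
    using filterlim_inverse_at_top_right unfolding filterlim_at_top by blast
  ultimately show ?thesis
  proof eventually_elim
    case (elim \<nu>)
    have "fl_transform (log_mgf M X) (1 / \<nu>) \<le> ereal (b * (1 / \<nu>) - q)"
      unfolding q_def using elim(3)
      by (intro fl_transform_log_mgf_le[OF X less_imp_le[OF b(1)] p_pos])
         (auto simp: field_simps)
    hence "ereal \<nu> * fl_transform (log_mgf M X) (1 / \<nu>) \<le> ereal \<nu> * ereal (b * (1 / \<nu>) - q)"
      using elim(2) by (intro ereal_mult_left_mono) simp_all
    also have "\<dots> = ereal (b - \<nu> * q)" using elim(2) by (simp add: field_simps)
    finally show ?case using elim(1) by simp
  qed
qed

theorem proposition2p5:
  fixes M :: "'a measure" and X :: "'a \<Rightarrow> real"
  assumes "prob_space M"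
    and "X \<in> borel_measurable M"
    and "\<forall>\<omega>\<in>space M. X \<omega> \<ge> 0"
  shows "((\<lambda>\<nu>::real. ereal \<nu> * fl_transform (log_mgf M X) (1 / \<nu>))
            \<longlongrightarrow> (SUP l\<in>{l. log_mgf M X l < \<infinity>}. ereal l)) (at_right 0)"
proof (rule order_tendstoI)
  interpret prob_space M by fact
  fix a
  show "a < (SUP l\<in>{l. log_mgf M X l < \<infinity>}. ereal l) \<Longrightarrow>
      \<forall>\<^sub>F \<nu> in at_right 0. a < ereal \<nu> * fl_transform (log_mgf M X) (1 / \<nu>)"
    by (rule eventually_less_scaled_fl_transform[OF log_mgf_neq_minf])
  show "(SUP l\<in>{l. log_mgf M X l < \<infinity>}. ereal l) < a \<Longrightarrow>
      \<forall>\<^sub>F \<nu> in at_right 0. ereal \<nu> * fl_transform (log_mgf M X) (1 / \<nu>) < a"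
    by (rule eventually_scaled_fl_transform_log_mgf_less[OF assms(2,3)])
qed

end
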